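(* Let $M$ be a vertically $k$-connected matroid on $E$, where $k\geq 2$ and $r(M)\geq \max\{3k-5,2\}$. Then $M$ has a unique tangle $\mathcal T$ of order $k$. Moreover a subset $A$ of $E$ belongs to $\mathcal T$ if and only if $r(A)\leq k-2$.
   Context: For a matroid $M$ on $E$ with rank function $r$, the connectivity function is $\lambda_M(X)=r(X)+r(E-X)-r(M)+1$. A $(k-1)$-separation of $M$ is a partition $(A,B)$ of $E$ with $\lambda_M(A)\le k-1$. Here "vertically $k$-connected" means (loosely vertically $k$-connected): for every $(k-1)$-separation $(A,B)$ of $M$, either $r(A)\le k-2$ or $r(B)\le k-2$. A tangle of order $k$ in $M$ is a collection $\mathcal T$ of subsets of $E$ such that (T1) $\lambda_M(A)<k$ for all $A\in\mathcal T$; (T2) if $\lambda_M(A)\le k-1$ then $A\in\mathcal T$ or $E-A\in\mathcal T$; (T3) $A\cup B\cup C\ne E$ for all $A,B,C\in\mathcal T$; (T4) $E-\{e\}\notin\mathcal T$ for each $e\in E$. *)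

theory Defs
  imports Main
begin

definition matroid :: "'a set \<Rightarrow> ('a set \<Rightarrow> nat) \<Rightarrow> bool" where
  "matroid E r \<longleftrightarrow> finite E
     \<and> (\<forall>X. X \<subseteq> E \<longrightarrow> r X \<le> card X)
     \<and> (\<forall>X Y. X \<subseteq> Y \<longrightarrow> Y \<subseteq> E \<longrightarrow> r X \<le> r Y)
     \<and> (\<forall>X Y. X \<subseteq> E \<longrightarrow> Y \<subseteq> E \<longrightarrow> r (X \<union> Y) + r (X \<inter> Y) \<le> r X + r Y)"

definition conn :: "'a set \<Rightarrow> ('a set \<Rightarrow> nat) \<Rightarrow> 'a set \<Rightarrow> int" where
  "conn E r X = int (r X) + int (r (E - X)) - int (r E) + 1"

definition vert_connected :: "'a set \<Rightarrow> ('a set \<Rightarrow> nat) \<Rightarrow> nat \<Rightarrow> bool" where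
  "vert_connected E r k \<longleftrightarrow>
     (\<forall>A. A \<subseteq> E \<longrightarrow> conn E r A \<le> int k - 1 \<longrightarrow>
          int (r A) \<le> int k - 2 \<or> int (r (E - A)) \<le> int k - 2)"

definition tangle :: "'a set \<Rightarrow> ('a set \<Rightarrow> nat) \<Rightarrow> nat \<Rightarrow> 'a set set \<Rightarrow> bool" where
  "tangle E r k T \<longleftrightarrow> T \<subseteq> Pow E
     \<and> (\<forall>A\<in>T. conn E r A < int k)
     \<and> (\<forall>A. A \<subseteq> E \<longrightarrow> conn E r A \<le> int k - 1 \<longrightarrow> A \<in> T \<or> E - A \<in> T)
     \<and> (\<forall>A\<in>T. \<forall>B\<in>T. \<forall>C\<in>T. A \<union> B \<union> C \<noteq> E)
     \<and> (\<forall>e\<in>E. E - {e} \<notin> T)"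

end

theory Submission
  imports Defs
begin

text \<open>Every tangle of order k contains all sets of rank at most k-2: grow such a set one
  element at a time; if A is in the tangle but A + e is not, then by (T2) its complement is,
  and together with the singleton {e} (in the tangle by (T2) and (T4)) this covers E,
  contradicting (T3). Vertical k-connectivity then forces the converse, since a set of
  connectivity below k in the tangle whose complement has rank at most k-2 would again
  violate (T3). Finally, when r(M) > 3(k-2) and r(M) > k-1, the sets of rank at most k-2
  themselves form a tangle: three of them have union of rank at most 3(k-2), and E - e has
  rank at least r(M) - 1.\<close>

lemma matroid_finite: "matroid E r \<Longrightarrow> finite E"
  by (simp add: matroid_def)

lemma matroid_rank_le_card: "matroid E r \<Longrightarrow> X \<subseteq> E \<Longrightarrow> r X \<le> card X"
  by (simp add: matroid_def)

lemma matroid_rank_mono: "matroid E r \<Longrightarrow> X \<subseteq> Y \<Longrightarrow> Y \<subseteq> E \<Longrightarrow> r X \<le> r Y"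
  by (simp add: matroid_def)

lemma matroid_rank_Un_le:
  "matroid E r \<Longrightarrow> X \<subseteq> E \<Longrightarrow> Y \<subseteq> E \<Longrightarrow> r (X \<union> Y) \<le> r X + r Y"
  unfolding matroid_def by (meson le_add1 order_trans)

lemma matroid_rank_singleton_le: "matroid E r \<Longrightarrow> e \<in> E \<Longrightarrow> r {e} \<le> 1"
  using matroid_rank_le_card[of E r "{e}"] by simp

lemma conn_le_if_rank_le:
  assumes "matroid E r" "A \<subseteq> E" "int (r A) \<le> int k - 2"
  shows "conn E r A \<le> int k - 1"
proof -
  have "r (E - A) \<le> r E"
    using matroid_rank_mono[OF assms(1), of "E - A" E] by auto
  with assms(3) show ?thesis
    unfolding conn_def by linarith
qed

lemma tangle_contains_if_rank_le:
  assumes m: "matroid E r" and t: "tangle E r k T"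
    and "A \<subseteq> E" and "int (r A) \<le> int k - 2"
  shows "A \<in> T"
proof -
  have T2: "\<And>A. A \<subseteq> E \<Longrightarrow> conn E r A \<le> int k - 1 \<Longrightarrow> A \<in> T \<or> E - A \<in> T"
    and T3: "\<And>A B C. A \<in> T \<Longrightarrow> B \<in> T \<Longrightarrow> C \<in> T \<Longrightarrow> A \<union> B \<union> C \<noteq> E"
    and T4: "\<And>e. e \<in> E \<Longrightarrow> E - {e} \<notin> T"
    using t unfolding tangle_def by blast+
  have "finite A"
    using matroid_finite[OF m] \<open>A \<subseteq> E\<close> finite_subset by blast
  then show ?thesis
    using \<open>A \<subseteq> E\<close> \<open>int (r A) \<le> int k - 2\<close>
  proof (induction A rule: finite_induct)
    case empty
    have "E \<notin> T"
      using T3[of E E E] by auto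
    then show ?case
      using T2[of "{}"] conn_le_if_rank_le[OF m, of "{}" k] empty by auto
  next
    case (insert e A)
    then have "e \<in> E" "A \<subseteq> E" by auto
    have "r A \<le> r (insert e A)" "r {e} \<le> r (insert e A)"
      using matroid_rank_mono[OF m, of A "insert e A"] matroid_rank_mono[OF m, of "{e}" "insert e A"]
        insert.prems(1) by auto
    then have "A \<in> T" and conn_e: "conn E r {e} \<le> int k - 1"
      using insert conn_le_if_rank_le[OF m, of "{e}" k] \<open>e \<in> E\<close> by auto
    have "{e} \<in> T"
      using T2[OF _ conn_e] T4[OF \<open>e \<in> E\<close>] \<open>e \<in> E\<close> by auto
    show ?case
    proof (rule ccontr)
      assume "insert e A \<notin> T"
      then have "E - insert e A \<in> T"
        using T2[of "insert e A"] conn_le_if_rank_le[OF m, of "insert e A" k] insert.prems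
        by auto
      moreover have "A \<union> {e} \<union> (E - insert e A) = E"
        using insert.prems(1) by auto
      ultimately show False
        using T3 \<open>A \<in> T\<close> \<open>{e} \<in> T\<close> by blast
    qed
  qed
qed

lemma tangle_mem_iff_rank_le:
  assumes m: "matroid E r" and v: "vert_connected E r k" and t: "tangle E r k T"
    and "A \<subseteq> E"
  shows "A \<in> T \<longleftrightarrow> int (r A) \<le> int k - 2"
proof
  assume "A \<in> T"
  then have "conn E r A < int k"
    using t unfolding tangle_def by blast
  then have "int (r A) \<le> int k - 2 \<or> int (r (E - A)) \<le> int k - 2"
    using v \<open>A \<subseteq> E\<close> unfolding vert_connected_def by auto
  moreover have "E - A \<notin> T"
  proof
    assume "E - A \<in> T"
    moreover have "A \<union> (E - A) \<union> (E - A) = E"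
      using \<open>A \<subseteq> E\<close> by auto
    ultimately show False
      using t \<open>A \<in> T\<close> unfolding tangle_def by blast
  qed
  ultimately show "int (r A) \<le> int k - 2"
    using tangle_contains_if_rank_le[OF m t, of "E - A"] by auto
next
  assume "int (r A) \<le> int k - 2"
  then show "A \<in> T"
    using tangle_contains_if_rank_le[OF m t \<open>A \<subseteq> E\<close>] by auto
qed

definition small_rank_sets :: "'a set \<Rightarrow> ('a set \<Rightarrow> nat) \<Rightarrow> nat \<Rightarrow> 'a set set" where
  "small_rank_sets E r k = {A. A \<subseteq> E \<and> int (r A) \<le> int k - 2}"

lemma tangle_eq_small_rank_sets:
  assumes "matroid E r" "vert_connected E r k" "tangle E r k T"
  shows "T = small_rank_sets E r k"
proof -
  have "T \<subseteq> Pow E"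
    using assms(3) by (simp add: tangle_def)
  then show ?thesis
    unfolding small_rank_sets_def
    using tangle_mem_iff_rank_le[OF assms] by blast
qed

lemma tangle_small_rank_sets:
  assumes m: "matroid E r" and v: "vert_connected E r k"
    and union3: "3 * (int k - 2) < int (r E)" and delete: "int k - 1 < int (r E)"
  shows "tangle E r k (small_rank_sets E r k)"
  unfolding tangle_def
proof (intro conjI ballI allI impI)
  show "small_rank_sets E r k \<subseteq> Pow E"
    unfolding small_rank_sets_def by auto
next
  fix A assume "A \<in> small_rank_sets E r k"
  then show "conn E r A < int k"
    using conn_le_if_rank_le[OF m, of A k] unfolding small_rank_sets_def by auto
next
  fix A assume "A \<subseteq> E" "conn E r A \<le> int k - 1"
  then show "A \<in> small_rank_sets E r k \<or> E - A \<in> small_rank_sets E r k"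
    using v unfolding vert_connected_def small_rank_sets_def by auto
next
  fix A B C
  assume small: "A \<in> small_rank_sets E r k" "B \<in> small_rank_sets E r k"
    "C \<in> small_rank_sets E r k"
  then have "A \<subseteq> E" "B \<subseteq> E" "C \<subseteq> E"
    unfolding small_rank_sets_def by auto
  then have "r (A \<union> B \<union> C) \<le> r A + r B + r C"
    using matroid_rank_Un_le[OF m, of "A \<union> B" C] matroid_rank_Un_le[OF m, of A B] by auto
  then have "int (r (A \<union> B \<union> C)) < int (r E)"
    using small union3 unfolding small_rank_sets_def by auto
  then show "A \<union> B \<union> C \<noteq> E" by auto
next
  fix e assume "e \<in> E"
  then have "E = (E - {e}) \<union> {e}" by auto
  then have "r E \<le> r (E - {e}) + 1"
    using matroid_rank_Un_le[OF m, of "E - {e}" "{e}"] matroid_rank_singleton_le[OF m \<open>e \<in> E\<close>]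
      \<open>e \<in> E\<close> by (metis Diff_subset add_left_mono empty_subsetI insert_subset order_trans)
  then show "E - {e} \<notin> small_rank_sets E r k"
    using delete unfolding small_rank_sets_def by auto
qed

theorem lemma2p3:
  fixes E :: "'a set" and r :: "'a set \<Rightarrow> nat" and k :: nat
  assumes "matroid E r"
    and "vert_connected E r k"
    and "k \<ge> 2"
    and "int (r E) \<ge> max (3 * int k - 5) 2"
  shows "(\<exists>!T. tangle E r k T)
    \<and> (\<forall>T. tangle E r k T \<longrightarrow> (\<forall>A. A \<subseteq> E \<longrightarrow> (A \<in> T \<longleftrightarrow> int (r A) \<le> int k - 2)))"
proof -
  have "3 * (int k - 2) < int (r E)" "int k - 1 < int (r E)"
    using assms(3,4) by auto
  then have "tangle E r k (small_rank_sets E r k)"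
    using tangle_small_rank_sets[OF assms(1,2)] by blast
  then have "\<exists>!T. tangle E r k T"
    using tangle_eq_small_rank_sets[OF assms(1,2)] by blast
  moreover have "\<forall>T. tangle E r k T \<longrightarrow> (\<forall>A. A \<subseteq> E \<longrightarrow> (A \<in> T \<longleftrightarrow> int (r A) \<le> int k - 2))"
    using tangle_mem_iff_rank_le[OF assms(1,2)] by blast
  ultimately show ?thesis ..
qed

end
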